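(* Let $f$ be analytic on $\mathcal{P}=\{z\in\mathbb{C}^n:|z-x_0|<\rho_0\}$, $x_0\in\mathbb{R}^n$, real-valued on real points, with $M(k)=\max_{|\alpha|=k}\sup_{\mathcal{P}}|\partial^\alpha f|$ and $\mu_{x_0}=\|\nabla f(x_0)\|>0$; let $E_0=f(x_0)$. With $c(n)$ a sufficiently small constant, let $\rho_1\le c(n)\min(\rho_0,\mu_{x_0}M(2)^{-1})$ and $r=c(n)\rho_1$, and let $g(y):=g(y,E_0)$ where, for $y\in\mathbb{R}^{n-1}$ with $|y|<r$, $g(y,E_0)$ is the unique $\xi$ with $|\xi|<\rho_1$ satisfying $f(\varphi(\xi,y;x_0))=E_0$. Let $h\in\mathbb{R}^n$ with $|h|<\rho_0/2$, $x_1=x_0+h$, $\mu_{x_1}=\|\nabla f(x_1)\|$, and assume $$\langle\nabla f(x_1),\nabla f(x_0)\rangle^2\le(1-\delta_0^2)\|\nabla f(x_1)\|^2\|\nabla f(x_0)\|^2,\qquad0<\delta_0\le1.$$ Let $\rho\le c(n)\min(r,\mu M(2)^{-1}\delta_0^2)$, with $\mu=\min(\mu_{x_0},\mu_{x_1})$. Then there exist $y\in\mathbb{R}^{n-1}$ with $\|y\|\le\rho$ and $x_0'=\varphi(g(y),y;x_0)$ with $\|x_0'-x_0\|\le2\rho$ such that $$|f(x_0'+h)-f(x_0+h)|\ge\tfrac12\mu_{x_1}\delta_0^2\rho.$$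
   Context: $|\cdot|$ is the sup-norm and $\|\cdot\|$ the Euclidean norm. Normal coordinates: $\mathfrak{n}_{x_0}=\mu_{x_0}^{-1}\nabla f(x_0)$, $\mathfrak{e}_{x_0,1},\dots,\mathfrak{e}_{x_0,n-1}$ an orthonormal basis of $\{\mathfrak{n}_{x_0}\}^\perp\subset\mathbb{R}^n$, and $\varphi(\xi,y;x_0)=x_0+\xi\mathfrak{n}_{x_0}+\sum_jy_j\mathfrak{e}_{x_0,j}$. (For such $\rho_1,r$ the solution $g(y,E_0)$ exists, is unique and analytic.) *)

theory Defs
  imports "HOL-Analysis.Analysis"
begin

definition supn :: "('a::real_normed_vector)^'n \<Rightarrow> real" where
  "supn x = Max (range (\<lambda>i. norm (x $ i)))"

definition cvec :: "real^'n \<Rightarrow> complex^'n" where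
  "cvec x = (\<chi> i. complex_of_real (x $ i))"

definition analytic_cn :: "(complex^'n \<Rightarrow> complex) \<Rightarrow> (complex^'n) set \<Rightarrow> bool" where
  "analytic_cn f S \<longleftrightarrow> (\<forall>z\<in>S. \<exists>e>0. \<exists>a :: ('n \<Rightarrow> nat) \<Rightarrow> complex.
      \<forall>w. supn (w - z) < e \<longrightarrow>
        ((\<lambda>\<alpha>. a \<alpha> * (\<Prod>i\<in>UNIV. (w $ i - z $ i) ^ (\<alpha> i))) has_sum f w) UNIV)"

definition cpd :: "'n \<Rightarrow> (complex^'n \<Rightarrow> complex) \<Rightarrow> complex^'n \<Rightarrow> complex" where
  "cpd i f z = deriv (\<lambda>t. f (z + axis i t)) 0"

fun cpds :: "'n list \<Rightarrow> (complex^'n \<Rightarrow> complex) \<Rightarrow> complex^'n \<Rightarrow> complex" where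
  "cpds [] f = f"
| "cpds (i # is) f = cpd i (cpds is f)"

definition freal :: "(complex^'n \<Rightarrow> complex) \<Rightarrow> real^'n \<Rightarrow> real" where
  "freal f x = Re (f (cvec x))"

definition rgrad :: "(complex^'n \<Rightarrow> complex) \<Rightarrow> real^'n \<Rightarrow> real^'n" where
  "rgrad f x = (\<chi> i. deriv (\<lambda>t::real. freal f (x + axis i t)) 0)"

text \<open>Normal coordinates: b is an orthonormal basis of R^n with b i0 = normal vector;
  y ranges over vectors with y $ i0 = 0 (identified with R^(n-1)).\<close>
definition phi :: "('n \<Rightarrow> real^'n) \<Rightarrow> 'n \<Rightarrow> real \<Rightarrow> real^'n \<Rightarrow> real^'n \<Rightarrow> real^'n" where
  "phi b i0 \<xi> y x0 = x0 + \<xi> *\<^sub>R b i0 + (\<Sum>j\<in>UNIV - {i0}. (y $ j) *\<^sub>R b j)"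

end

(* Write F = Re f on real points, N = b i0 for the unit normal at x0, and d for the dimension.
   Coordinatewise mean-value estimates, using that the partial derivatives of an analytic
   function are again holomorphic along coordinate lines, show that grad F is d^2 M2-Lipschitz
   and that F differs from its first-order Taylor polynomial by at most d^2 M2 |q - p|^2.
   The angle condition makes the tangential part of grad F(x1) at least delta0 mu1 long; let w be
   the tangent vector of length rho in that direction.  Along the normal line through x0 + w the
   function F grows with slope at least mu0/2, so the level E0 is met at a unique height g(y),
   and the Taylor estimate at x0 gives |g(y)| mu0 <= 2 d^2 M2 rho^2.  Finally the Taylor estimate
   at x1 gives F(x0' + h) - F(x1) >= delta0 mu1 rho - |g(y)| mu1 - 4 d^2 M2 rho^2, which exceeds
   delta0^2 mu1 rho / 2 for the admissible rho. *)

theory Submission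
  imports Defs "HOL-Complex_Analysis.Cauchy_Integral_Formula"
begin

lemma supn_component_le: "norm (x $ i) \<le> supn x"
  unfolding supn_def by (rule Max_ge) auto

lemma supn_less_iff: "supn x < e \<longleftrightarrow> (\<forall>i. norm (x $ i) < e)"
  unfolding supn_def by (subst Max_less_iff) auto

lemma supn_le_iff: "supn x \<le> e \<longleftrightarrow> (\<forall>i. norm (x $ i) \<le> e)"
  unfolding supn_def by (subst Max_le_iff) auto

lemma supn_le_norm: "supn (x::real^'n) \<le> norm x"
  unfolding supn_le_iff by (simp add: component_le_norm_cart)

lemma supn_add_le: "supn (x + y) \<le> supn x + supn y"
  unfolding supn_le_iff by (metis add_mono norm_triangle_le supn_component_le vector_add_component)

lemma supn_axis: "supn (axis j (u::'a::real_normed_vector)) = norm u"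
  using supn_component_le[of "axis j u" j] by (intro antisym) (auto simp: supn_le_iff axis_def)

lemma supn_zero [simp]: "supn (0::'a::real_normed_vector^'n) = 0"
  by (simp add: supn_def)

lemma supn_cvec: "supn (cvec x) = supn x"
  unfolding supn_def cvec_def by simp

lemma cvec_add: "cvec (x + y) = cvec x + cvec y"
  by (simp add: cvec_def vec_eq_iff)

lemma cvec_diff: "cvec (x - y) = cvec x - cvec y"
  by (simp add: cvec_def vec_eq_iff)

lemma cvec_axis: "cvec (axis j t) = axis j (complex_of_real t)"
  by (simp add: cvec_def vec_eq_iff axis_def)

lemma axis_zero [simp]: "axis j 0 = (0::'a::zero^'n)"
  by (simp add: vec_eq_iff axis_def)

lemma axis_add: "axis j (a + b) = axis j a + axis j (b::'a::monoid_add)"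
  by (auto simp: vec_eq_iff axis_def)

lemma sum_abs_le_card_norm: "(\<Sum>j\<in>UNIV. \<bar>v $ j\<bar>) \<le> real CARD('n) * norm (v::real^'n)"
  using sum_mono[of UNIV "\<lambda>j. \<bar>v $ j\<bar>" "\<lambda>_. norm v"] by (simp add: component_le_norm_cart)

subsection \<open>Power series along coordinate lines and planes\<close>

lemma prod_power_axis:
  "(\<Prod>i\<in>UNIV. (axis j (u::complex) $ i) ^ \<alpha> i) =
     (if \<forall>i. i \<noteq> j \<longrightarrow> \<alpha> i = 0 then u ^ \<alpha> j else 0)"
proof (cases "\<forall>i. i \<noteq> j \<longrightarrow> \<alpha> i = 0")
  case True
  have "(\<Prod>i\<in>UNIV. (axis j u $ i) ^ \<alpha> i) = (\<Prod>i\<in>{j}. (axis j u $ i) ^ \<alpha> i)"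
    by (rule prod.mono_neutral_right) (auto simp: True axis_def)
  then show ?thesis using True by simp
next
  case False
  then obtain i where "i \<noteq> j" "\<alpha> i \<noteq> 0" by auto
  then have "(\<Prod>i\<in>UNIV. (axis j u $ i) ^ \<alpha> i) = 0"
    by (subst prod_zero_iff) (auto simp: axis_def intro!: bexI[of _ i])
  then show ?thesis unfolding if_not_P[OF False] .
qed

lemma prod_power_axis2:
  assumes "i \<noteq> j"
  shows "(\<Prod>m\<in>UNIV. ((axis j (u::complex) + axis i t) $ m) ^ \<alpha> m) =
     (if \<forall>m. m \<noteq> j \<and> m \<noteq> i \<longrightarrow> \<alpha> m = 0 then u ^ \<alpha> j * t ^ \<alpha> i else 0)"
proof (cases "\<forall>m. m \<noteq> j \<and> m \<noteq> i \<longrightarrow> \<alpha> m = 0")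
  case True
  have "(\<Prod>m\<in>UNIV. ((axis j u + axis i t) $ m) ^ \<alpha> m) = (\<Prod>m\<in>{j,i}. ((axis j u + axis i t) $ m) ^ \<alpha> m)"
    by (rule prod.mono_neutral_right) (auto simp: True axis_def)
  then show ?thesis using True assms by (simp add: axis_def)
next
  case False
  then obtain m where "m \<noteq> j" "m \<noteq> i" "\<alpha> m \<noteq> 0" by auto
  then have "(\<Prod>m\<in>UNIV. ((axis j u + axis i t) $ m) ^ \<alpha> m) = 0"
    by (subst prod_zero_iff) (auto simp: axis_def intro!: bexI[of _ m])
  then show ?thesis unfolding if_not_P[OF False] .
qed

text \<open>Restricting the multivariate expansion to the monomials that do not vanish on a
  coordinate line (resp. plane) through the centre, reindexed by the exponents that survive.\<close>

lemma analytic_cn_axis_series: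
  fixes f :: "complex^'n \<Rightarrow> complex" and j :: 'n
  assumes "analytic_cn f P" and "z \<in> P"
  obtains e c where "e > 0" "\<And>u. norm u < e \<Longrightarrow> (\<lambda>k. c k * u ^ k) sums f (z + axis j u)"
proof -
  from assms obtain e and a :: "('n \<Rightarrow> nat) \<Rightarrow> complex" where e: "e > 0" and
    hs: "\<And>w. supn (w - z) < e \<Longrightarrow>
        ((\<lambda>\<alpha>. a \<alpha> * (\<Prod>i\<in>UNIV. (w $ i - z $ i) ^ \<alpha> i)) has_sum f w) UNIV"
    unfolding analytic_cn_def by blast
  define emb where "emb k = (\<lambda>i. if i = j then k else 0)" for k :: nat
  have inj: "inj emb" unfolding emb_def by (auto simp: inj_on_def fun_eq_iff)
  have "(\<lambda>k. a (emb k) * u ^ k) sums f (z + axis j u)" if u: "norm u < e" for u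
  proof -
    let ?T = "\<lambda>\<alpha>. a \<alpha> * (\<Prod>i\<in>UNIV. (axis j u $ i) ^ \<alpha> i)"
    have "(?T has_sum f (z + axis j u)) UNIV"
      using hs[of "z + axis j u"] u by (simp add: supn_axis)
    moreover have "?T \<alpha> = 0" if "\<alpha> \<notin> range emb" for \<alpha>
    proof -
      have "\<not> (\<forall>i. i \<noteq> j \<longrightarrow> \<alpha> i = 0)"
      proof
        assume "\<forall>i. i \<noteq> j \<longrightarrow> \<alpha> i = 0"
        then have "\<alpha> = emb (\<alpha> j)" by (auto simp: emb_def fun_eq_iff)
        then show False using that by blast
      qed
      then show ?thesis by (simp only: prod_power_axis if_False mult_zero_right)
    qed
    ultimately have "(?T has_sum f (z + axis j u)) (range emb)"
      by (intro has_sum_cong_neutral[where S=UNIV and T="range emb" and f="?T" and g="?T", THEN iffD1]) auto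
    then have "((?T \<circ> emb) has_sum f (z + axis j u)) UNIV"
      using has_sum_reindex[OF inj] by blast
    moreover have "?T \<circ> emb = (\<lambda>k. a (emb k) * u ^ k)"
    proof
      fix k
      have "\<forall>i. i \<noteq> j \<longrightarrow> emb k i = 0" "emb k j = k" by (auto simp: emb_def)
      then show "(?T \<circ> emb) k = a (emb k) * u ^ k" by (simp add: prod_power_axis)
    qed
    ultimately show ?thesis using has_sum_imp_sums by metis
  qed
  with e show ?thesis by (intro that[of e "\<lambda>k. a (emb k)"])
qed

lemma analytic_cn_plane_series:
  fixes f :: "complex^'n \<Rightarrow> complex" and i j :: 'n
  assumes "analytic_cn f P" and "z \<in> P" and ij: "i \<noteq> j"
  obtains e a2 where "e > 0" "\<And>u t. norm u < e \<Longrightarrow> norm t < e \<Longrightarrow>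
     ((\<lambda>(l,k). a2 (l,k) * (u ^ k * t ^ l)) has_sum f (z + axis j u + axis i t)) UNIV"
proof -
  from assms obtain e and a :: "('n \<Rightarrow> nat) \<Rightarrow> complex" where e: "e > 0" and
    hs: "\<And>w. supn (w - z) < e \<Longrightarrow>
        ((\<lambda>\<alpha>. a \<alpha> * (\<Prod>i\<in>UNIV. (w $ i - z $ i) ^ \<alpha> i)) has_sum f w) UNIV"
    unfolding analytic_cn_def by blast
  define emb where "emb = (\<lambda>(l::nat,k::nat). (\<lambda>m. if m = j then k else if m = i then l else 0))"
  have inj: "inj emb" unfolding emb_def using ij by (auto simp: inj_on_def fun_eq_iff)
  have "((\<lambda>(l,k). a (emb (l,k)) * (u ^ k * t ^ l)) has_sum f (z + axis j u + axis i t)) UNIV"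
    if u: "norm u < e" and t: "norm t < e" for u t
  proof -
    let ?T = "\<lambda>\<alpha>. a \<alpha> * (\<Prod>m\<in>UNIV. ((axis j u + axis i t) $ m) ^ \<alpha> m)"
    have "supn (axis j u + axis i t) < e"
      unfolding supn_less_iff using u t e ij by (auto simp: axis_def)
    then have "(?T has_sum f (z + axis j u + axis i t)) UNIV"
      using hs[of "z + axis j u + axis i t"] by (simp add: algebra_simps)
    moreover have "?T \<alpha> = 0" if "\<alpha> \<notin> range emb" for \<alpha>
    proof -
      have "\<not> (\<forall>m. m \<noteq> j \<and> m \<noteq> i \<longrightarrow> \<alpha> m = 0)"
      proof
        assume "\<forall>m. m \<noteq> j \<and> m \<noteq> i \<longrightarrow> \<alpha> m = 0"
        then have "\<alpha> = emb (\<alpha> i, \<alpha> j)" by (auto simp: emb_def fun_eq_iff)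
        then show False using that by blast
      qed
      then show ?thesis by (simp only: prod_power_axis2[OF ij] if_False mult_zero_right)
    qed
    ultimately have "(?T has_sum f (z + axis j u + axis i t)) (range emb)"
      by (intro has_sum_cong_neutral[where S=UNIV and T="range emb" and f="?T" and g="?T", THEN iffD1]) auto
    then have "((?T \<circ> emb) has_sum f (z + axis j u + axis i t)) UNIV"
      using has_sum_reindex[OF inj] by blast
    also have "?T \<circ> emb = (\<lambda>(l,k). a (emb (l,k)) * (u ^ k * t ^ l))"
    proof
      fix p :: "nat \<times> nat"
      obtain l k where p: "p = (l,k)" by (cases p)
      have "\<forall>m. m \<noteq> j \<and> m \<noteq> i \<longrightarrow> emb (l,k) m = 0" "emb (l,k) j = k" "emb (l,k) i = l"
        using ij by (auto simp: emb_def)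
      then show "(?T \<circ> emb) p = (\<lambda>(l,k). a (emb (l,k)) * (u ^ k * t ^ l)) p"
        unfolding p comp_def prod_power_axis2[OF ij] by simp
    qed
    finally show ?thesis .
  qed
  with e show ?thesis by (intro that[of e "\<lambda>p. a (emb p)"])
qed

lemma power_series_has_field_derivative_0:
  fixes c :: "nat \<Rightarrow> 'a::{real_normed_field,banach}"
  assumes "e > 0" and "\<And>u. norm u < e \<Longrightarrow> (\<lambda>k. c k * u ^ k) sums g u"
  shows "(g has_field_derivative c 1) (at 0)"
proof -
  have "((\<lambda>u. \<Sum>k. c k * u ^ k) has_field_derivative (\<Sum>k. diffs c k * 0 ^ k)) (at 0)"
    by (rule termdiffs_strong') (use assms sums_summable in auto)
  then have "((\<lambda>u. \<Sum>k. c k * u ^ k) has_field_derivative c 1) (at 0)"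
    by (simp add: powser_zero diffs_def)
  then show ?thesis
  proof (rule has_field_derivative_transform_within_open[of _ _ _ "ball 0 e"])
    show "(\<Sum>k. c k * u ^ k) = g u" if "u \<in> ball 0 e" for u
      using assms(2) that by (metis mem_ball_0 sums_unique)
  qed (use assms in auto)
qed

text \<open>A nonzero point of the disc shows that each row converges.\<close>

lemma power_series_rows:
  fixes a :: "nat \<times> nat \<Rightarrow> complex"
  assumes "e > 0" and hs: "\<And>t. norm t < e \<Longrightarrow> ((\<lambda>(l,k). a (l,k) * t ^ l) has_sum S t) UNIV"
    and t: "norm t < e"
  shows "(\<lambda>k. a (l,k)) summable_on UNIV" and "(\<lambda>l. (\<Sum>\<^sub>\<infinity>k. a (l,k)) * t ^ l) sums S t"
proof -
  have scaled_row_summable: "(\<lambda>k. a (l,k) * s ^ l) summable_on UNIV" if "norm s < e" for s l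
  proof -
    have "(\<lambda>(l,k). a (l,k) * s ^ l) summable_on UNIV"
      using hs[OF that] by (auto simp: summable_on_def)
    then have "(\<lambda>(l,k). a (l,k) * s ^ l) summable_on Pair l ` UNIV"
      by (rule summable_on_subset_banach) auto
    then show ?thesis by (subst (asm) summable_on_reindex) (auto simp: inj_on_def comp_def)
  qed
  show "(\<lambda>k. a (l,k)) summable_on UNIV" for l
  proof -
    define s where "s = complex_of_real (e/2)"
    have "norm s < e" "s \<noteq> 0" using assms by (auto simp: s_def)
    then show ?thesis
      using scaled_row_summable[of s l] summable_on_cmult_left'[where c="s ^ l" and f="\<lambda>k. a (l,k)"] by simp
  qed
  have row: "(\<Sum>\<^sub>\<infinity>k. a (l,k) * t ^ l) = (\<Sum>\<^sub>\<infinity>k. a (l,k)) * t ^ l" for l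
    by (rule infsum_cmult_left')
  have sm: "(\<lambda>(l,k). a (l,k) * t ^ l) summable_on UNIV \<times> UNIV"
    using hs[OF t] by (auto simp: summable_on_def)
  have "(\<Sum>\<^sub>\<infinity>l. (\<Sum>\<^sub>\<infinity>k. a (l,k)) * t ^ l) = S t"
    using infsum_Sigma'_banach[OF sm] infsumI[OF hs[OF t]] by (simp add: row)
  moreover have "(\<lambda>l. (\<Sum>\<^sub>\<infinity>k. a (l,k)) * t ^ l) summable_on UNIV"
    using summable_on_Sigma_banach[OF sm] by (simp add: row)
  ultimately show "(\<lambda>l. (\<Sum>\<^sub>\<infinity>k. a (l,k)) * t ^ l) sums S t"
    by (metis has_sum_imp_sums summable_iff_has_sum_infsum)
qed

subsection \<open>Holomorphy along coordinate lines\<close>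

definition slice_differentiable :: "(complex^'n \<Rightarrow> complex) \<Rightarrow> (complex^'n) set \<Rightarrow> bool" where
  "slice_differentiable \<phi> P \<longleftrightarrow> (\<forall>z\<in>P. \<forall>j. (\<lambda>u. \<phi> (z + axis j u)) field_differentiable (at 0))"

lemma analytic_cn_slice_differentiable:
  assumes "analytic_cn f P"
  shows "slice_differentiable f P"
  unfolding slice_differentiable_def
proof (intro ballI allI)
  fix z j assume "z \<in> P"
  then obtain e c where "e > 0" "\<And>u. norm u < e \<Longrightarrow> (\<lambda>k. c k * u ^ k) sums f (z + axis j u)"
    using analytic_cn_axis_series[OF assms \<open>z \<in> P\<close>, where j=j] by blast
  then have "((\<lambda>u. f (z + axis j u)) has_field_derivative c 1) (at 0)"
    by (rule power_series_has_field_derivative_0)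
  then show "(\<lambda>u. f (z + axis j u)) field_differentiable (at 0)"
    unfolding field_differentiable_def by blast
qed

lemma slice_differentiable_has_field_derivative:
  assumes "slice_differentiable \<phi> P" and "z + axis j u \<in> P"
  shows "((\<lambda>s. \<phi> (z + axis j s)) has_field_derivative cpd j \<phi> (z + axis j u)) (at u)"
proof -
  have "(\<lambda>t. \<phi> (z + axis j u + axis j t)) field_differentiable (at 0)"
    using assms unfolding slice_differentiable_def by blast
  then have "((\<lambda>t. \<phi> (z + axis j u + axis j t)) has_field_derivative cpd j \<phi> (z + axis j u)) (at 0)"
    unfolding cpd_def by (simp add: DERIV_deriv_iff_field_differentiable)
  then have "((\<lambda>t. \<phi> (z + axis j (t + u))) has_field_derivative cpd j \<phi> (z + axis j u)) (at 0)"
    by (simp add: axis_add algebra_simps)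
  then show ?thesis using DERIV_shift[of "\<lambda>s. \<phi> (z + axis j s)" _ 0 u] by simp
qed

text \<open>For \<open>i \<noteq> j\<close>, the coefficients of \<open>t\<^sup>1\<close> in the expansion over the
  \<open>(j, i)\<close>-plane form a power series in \<open>u\<close> for \<open>cpd i f\<close> along the \<open>j\<close>-line.\<close>

lemma cpd_axis_series:
  fixes f :: "complex^'n \<Rightarrow> complex" and i j :: 'n
  assumes "analytic_cn f P" and "z \<in> P" and "i \<noteq> j"
  obtains e c where "e > 0" "\<And>u. norm u < e \<Longrightarrow> (\<lambda>k. c k * u ^ k) sums cpd i f (z + axis j u)"
proof -
  obtain e a where e: "e > 0" and hs: "\<And>u t. norm u < e \<Longrightarrow> norm t < e \<Longrightarrow>
     ((\<lambda>(l,k). a (l,k) * (u ^ k * t ^ l)) has_sum f (z + axis j u + axis i t)) UNIV"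
    using analytic_cn_plane_series[OF assms] by blast
  have "(\<lambda>k. a (1,k) * u ^ k) sums cpd i f (z + axis j u)" if u: "norm u < e" for u
  proof -
    define A where "A p = a p * u ^ snd p" for p
    have hs': "((\<lambda>(l,k). A (l,k) * t ^ l) has_sum f (z + axis j u + axis i t)) UNIV"
      if "norm t < e" for t
      using hs[OF u that] by (simp add: A_def mult.assoc)
    have "((\<lambda>t. f (z + axis j u + axis i t)) has_field_derivative (\<Sum>\<^sub>\<infinity>k. A (1,k))) (at 0)"
      using e power_series_rows(2)[OF e hs'] by (rule power_series_has_field_derivative_0)
    then have "cpd i f (z + axis j u) = (\<Sum>\<^sub>\<infinity>k. A (1,k))"
      unfolding cpd_def by (rule DERIV_imp_deriv)
    moreover have "(\<lambda>k. A (1,k)) summable_on UNIV"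
      using power_series_rows(1)[OF e hs', of 0] e by simp
    moreover have "(\<lambda>k. A (1,k)) = (\<lambda>k. a (1,k) * u ^ k)"
      by (simp add: A_def)
    ultimately show ?thesis
      using has_sum_imp_sums summable_iff_has_sum_infsum by metis
  qed
  with e show ?thesis by (intro that[of e "\<lambda>k. a (1,k)"])
qed

lemma slice_differentiable_cpd:
  fixes f :: "complex^'n \<Rightarrow> complex"
  assumes an: "analytic_cn f {z. supn (z - c) < R}"
  shows "slice_differentiable (cpd i f) {z. supn (z - c) < R}"
  unfolding slice_differentiable_def
proof (intro ballI allI)
  fix z j assume z: "z \<in> {z. supn (z - c) < R}"
  show "(\<lambda>u. cpd i f (z + axis j u)) field_differentiable (at 0)"
  proof (cases "i = j")
    case False
    then obtain e a where "e > 0" "\<And>u. norm u < e \<Longrightarrow> (\<lambda>k. a k * u ^ k) sums cpd i f (z + axis j u)"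
      using cpd_axis_series[OF an z False] by blast
    then have "((\<lambda>u. cpd i f (z + axis j u)) has_field_derivative a 1) (at 0)"
      by (rule power_series_has_field_derivative_0)
    then show ?thesis unfolding field_differentiable_def by blast
  next
    case True
    define \<epsilon> where "\<epsilon> = R - supn (z - c)"
    have "\<epsilon> > 0" using z by (simp add: \<epsilon>_def)
    have "z + axis j u \<in> {z. supn (z - c) < R}" if "u \<in> ball 0 \<epsilon>" for u
      using that supn_add_le[of "axis j u" "z - c"] by (simp add: \<epsilon>_def supn_axis algebra_simps)
    then have deriv_f: "((\<lambda>s. f (z + axis j s)) has_field_derivative cpd j f (z + axis j u)) (at u)"
      if "u \<in> ball 0 \<epsilon>" for u
      using slice_differentiable_has_field_derivative[OF analytic_cn_slice_differentiable[OF an]] that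
      by blast
    then have "(\<lambda>s. f (z + axis j s)) holomorphic_on ball 0 \<epsilon>"
      unfolding holomorphic_on_open[OF open_ball] field_differentiable_def by blast
    then have "deriv (\<lambda>s. f (z + axis j s)) holomorphic_on ball 0 \<epsilon>"
      by (rule holomorphic_deriv) auto
    then have "deriv (\<lambda>s. f (z + axis j s)) field_differentiable (at 0)"
      using holomorphic_on_imp_differentiable_at[OF _ open_ball] \<open>\<epsilon> > 0\<close> by simp
    then obtain D where D: "(deriv (\<lambda>s. f (z + axis j s)) has_field_derivative D) (at 0)"
      unfolding field_differentiable_def by blast
    have "((\<lambda>u. cpd i f (z + axis j u)) has_field_derivative D) (at 0)"
    proof (rule has_field_derivative_transform_within_open[OF D, of "ball 0 \<epsilon>"])
      show "deriv (\<lambda>s. f (z + axis j s)) u = cpd i f (z + axis j u)" if "u \<in> ball 0 \<epsilon>" for u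
        using DERIV_imp_deriv[OF deriv_f[OF that]] True by simp
    qed (use \<open>\<epsilon> > 0\<close> in auto)
    then show ?thesis unfolding field_differentiable_def by blast
  qed
qed

lemma slice_differentiable_real_derivative:
  assumes "slice_differentiable \<phi> P" and "cvec (p + axis j t) \<in> P"
  shows "((\<lambda>s. Re (\<phi> (cvec (p + axis j s)))) has_real_derivative Re (cpd j \<phi> (cvec (p + axis j t)))) (at t)"
proof -
  have eq: "cvec (p + axis j s) = cvec p + axis j (complex_of_real s)" for s
    by (simp add: cvec_add cvec_axis)
  have "((\<lambda>u. \<phi> (cvec p + axis j u)) has_field_derivative cpd j \<phi> (cvec (p + axis j t)))
      (at (complex_of_real t))"
    using slice_differentiable_has_field_derivative[OF assms(1)] assms(2) by (simp add: eq)
  then have "((\<lambda>s. \<phi> (cvec p + axis j (complex_of_real s))) has_vector_derivative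
      cpd j \<phi> (cvec (p + axis j t))) (at t)"
    using has_vector_derivative_real_field by blast
  then show ?thesis unfolding eq by (rule has_field_derivative_Re)
qed

subsection \<open>Second-order estimates on a box\<close>

lemma real_derivative_bound_segment:
  fixes H H' :: "real \<Rightarrow> real"
  assumes "\<And>s. s \<in> closed_segment 0 t \<Longrightarrow> (H has_real_derivative H' s) (at s)"
    and "\<And>s. s \<in> closed_segment 0 t \<Longrightarrow> \<bar>H' s\<bar> \<le> L"
  shows "\<bar>H t - H 0\<bar> \<le> L * \<bar>t\<bar>"
  using field_differentiable_bound[of "closed_segment 0 t" H H' L t 0] assms
  by (auto intro: has_field_derivative_at_within)

definition coord_mix :: "real^'n \<Rightarrow> real^'n \<Rightarrow> 'n set \<Rightarrow> real^'n" where
  "coord_mix p q S = (\<chi> i. if i \<in> S then q $ i else p $ i)"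

lemma coord_mix_insert:
  "j \<notin> S \<Longrightarrow> coord_mix p q (insert j S) = coord_mix p q S + axis j (q $ j - p $ j)"
  by (auto simp: coord_mix_def vec_eq_iff axis_def)

lemma telescope_coord_mix:
  fixes Q :: "real^'n \<Rightarrow> real"
  assumes "\<And>S j. j \<notin> S \<Longrightarrow> \<bar>Q (coord_mix p q (insert j S)) - Q (coord_mix p q S) - a j\<bar> \<le> e j"
  shows "\<bar>Q q - Q p - (\<Sum>j\<in>UNIV. a j)\<bar> \<le> (\<Sum>j\<in>UNIV. e j)"
proof -
  have "\<bar>Q (coord_mix p q S) - Q p - (\<Sum>j\<in>S. a j)\<bar> \<le> (\<Sum>j\<in>S. e j)" if "finite S" for S
    using that
  proof (induction S rule: finite_induct)
    case empty
    then show ?case by (simp add: coord_mix_def)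
  next
    case (insert j S)
    then show ?case using assms[OF insert(2)] by (simp add: abs_le_iff)
  qed
  from this[of UNIV] show ?thesis by (simp add: coord_mix_def)
qed

lemma coord_mix_axis_segment:
  fixes p q x0 :: "real^'n"
  assumes p: "supn (p - x0) < R" and q: "supn (q - x0) < R" and "j \<notin> S"
    and s: "s \<in> closed_segment 0 (q $ j - p $ j)"
  shows "supn (coord_mix p q S + axis j s - x0) < R"
    and "norm (coord_mix p q S + axis j s - p) \<le> norm (q - p)"
proof -
  have "\<bar>p $ i - x0 $ i\<bar> < R" "\<bar>q $ i - x0 $ i\<bar> < R" for i
    using p q unfolding supn_less_iff by auto
  moreover have "\<bar>p $ j - x0 $ j + s\<bar> < R" "\<bar>s\<bar> \<le> \<bar>q $ j - p $ j\<bar>"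
    using s calculation[of j] by (auto simp: closed_segment_eq_real_ivl split: if_splits)
  ultimately show "supn (coord_mix p q S + axis j s - x0) < R"
    and "norm (coord_mix p q S + axis j s - p) \<le> norm (q - p)"
    using \<open>j \<notin> S\<close>
    by (auto simp: supn_less_iff coord_mix_def axis_def algebra_simps intro!: norm_le_componentwise_cart)
qed

locale analytic_box =
  fixes f :: "complex^'n \<Rightarrow> complex" and x0 :: "real^'n" and R M2 :: real
  assumes analytic: "analytic_cn f {z. supn (z - cvec x0) < R}"
    and second_partials_bounded:
      "\<forall>is z. length is = 2 \<and> z \<in> {z. supn (z - cvec x0) < R} \<longrightarrow> norm (cpds is f z) \<le> M2"
begin

definition grad_re :: "real^'n \<Rightarrow> real^'n" where
  "grad_re p = (\<chi> i. Re (cpd i f (cvec p)))"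

lemma cvec_in_box_iff: "cvec x \<in> {z. supn (z - cvec x0) < R} \<longleftrightarrow> supn (x - x0) < R"
  by (simp add: cvec_diff[symmetric] supn_cvec)

lemma M2_nonneg: "supn (p - x0) < R \<Longrightarrow> 0 \<le> M2"
  using second_partials_bounded cvec_in_box_iff[of p] norm_ge_zero order_trans
  by (metis (no_types, lifting) length_replicate mem_Collect_eq)

lemma freal_axis_has_real_derivative:
  assumes "supn (p + axis j t - x0) < R"
  shows "((\<lambda>s. freal f (p + axis j s)) has_real_derivative grad_re (p + axis j t) $ j) (at t)"
  using slice_differentiable_real_derivative[OF analytic_cn_slice_differentiable[OF analytic], of p j t]
    assms cvec_in_box_iff
  unfolding freal_def grad_re_def by simp

lemma rgrad_eq_grad_re:
  assumes "supn (p - x0) < R"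
  shows "rgrad f p = grad_re p"
proof -
  have "deriv (\<lambda>t. freal f (p + axis j t)) 0 = grad_re p $ j" for j
    using DERIV_imp_deriv[OF freal_axis_has_real_derivative[of p j 0]] assms by simp
  then show ?thesis unfolding rgrad_def by (simp add: vec_eq_iff)
qed

lemma grad_re_component_bound:
  assumes p: "supn (p - x0) < R" and q: "supn (q - x0) < R"
  shows "\<bar>grad_re q $ i - grad_re p $ i\<bar> \<le> M2 * (\<Sum>j\<in>UNIV. \<bar>q $ j - p $ j\<bar>)"
proof -
  have "\<bar>grad_re (coord_mix p q (insert j S)) $ i - grad_re (coord_mix p q S) $ i - 0\<bar>
      \<le> M2 * \<bar>q $ j - p $ j\<bar>" if jS: "j \<notin> S" for S j
  proof -
    let ?m = "coord_mix p q S"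
    let ?H = "\<lambda>s. Re (cpd i f (cvec (?m + axis j s)))"
    have "\<bar>?H (q $ j - p $ j) - ?H 0\<bar> \<le> M2 * \<bar>q $ j - p $ j\<bar>"
    proof (rule real_derivative_bound_segment)
      fix s assume "s \<in> closed_segment 0 (q $ j - p $ j)"
      then have inB: "cvec (?m + axis j s) \<in> {z. supn (z - cvec x0) < R}"
        using coord_mix_axis_segment[OF p q jS] cvec_in_box_iff by simp
      show "(?H has_real_derivative Re (cpd j (cpd i f) (cvec (?m + axis j s)))) (at s)"
        by (rule slice_differentiable_real_derivative[OF slice_differentiable_cpd[OF analytic] inB])
      have "norm (cpds [j, i] f (cvec (?m + axis j s))) \<le> M2"
        using second_partials_bounded[rule_format, of "[j, i]"] inB by simp
      then show "\<bar>Re (cpd j (cpd i f) (cvec (?m + axis j s)))\<bar> \<le> M2"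
        using abs_Re_le_cmod[of "cpd j (cpd i f) (cvec (?m + axis j s))"] by simp
    qed
    then show ?thesis by (simp add: coord_mix_insert[OF jS] grad_re_def)
  qed
  then show ?thesis
    using telescope_coord_mix[of "\<lambda>x. grad_re x $ i" p q "\<lambda>_. 0" "\<lambda>j. M2 * \<bar>q $ j - p $ j\<bar>"]
    by (simp add: sum_distrib_left)
qed

lemma grad_re_component_bound_norm:
  assumes "supn (p - x0) < R" and "supn (q - x0) < R"
  shows "\<bar>grad_re q $ i - grad_re p $ i\<bar> \<le> real CARD('n) * M2 * norm (q - p)"
proof -
  have "\<bar>grad_re q $ i - grad_re p $ i\<bar> \<le> M2 * (\<Sum>j\<in>UNIV. \<bar>(q - p) $ j\<bar>)"
    using grad_re_component_bound[OF assms] by simp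
  also have "\<dots> \<le> M2 * (real CARD('n) * norm (q - p))"
    using M2_nonneg[OF assms(1)] by (intro mult_left_mono sum_abs_le_card_norm)
  finally show ?thesis by (simp add: mult_ac)
qed

lemma rgrad_lipschitz:
  assumes "supn (p - x0) < R" and "supn (q - x0) < R"
  shows "norm (rgrad f q - rgrad f p) \<le> real CARD('n) ^ 2 * M2 * norm (q - p)"
proof -
  have "norm (grad_re q - grad_re p) \<le> (\<Sum>i\<in>UNIV. \<bar>(grad_re q - grad_re p) $ i\<bar>)"
    by (rule norm_le_l1_cart)
  also have "\<dots> \<le> (\<Sum>i\<in>(UNIV::'n set). real CARD('n) * M2 * norm (q - p))"
    using grad_re_component_bound_norm[OF assms] by (intro sum_mono) simp
  also have "\<dots> = real CARD('n) ^ 2 * M2 * norm (q - p)"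
    by (simp add: power2_eq_square)
  finally show ?thesis using assms by (simp add: rgrad_eq_grad_re)
qed

lemma freal_taylor_bound:
  assumes p: "supn (p - x0) < R" and q: "supn (q - x0) < R"
  shows "\<bar>freal f q - freal f p - rgrad f p \<bullet> (q - p)\<bar> \<le> real CARD('n) ^ 2 * M2 * (norm (q - p))\<^sup>2"
proof -
  let ?K = "real CARD('n) * M2 * norm (q - p)"
  have "\<bar>freal f (coord_mix p q (insert j S)) - freal f (coord_mix p q S) - grad_re p $ j * (q $ j - p $ j)\<bar>
      \<le> ?K * \<bar>q $ j - p $ j\<bar>" if jS: "j \<notin> S" for S j
  proof -
    let ?m = "coord_mix p q S"
    let ?H = "\<lambda>s. freal f (?m + axis j s) - grad_re p $ j * s"
    have "\<bar>?H (q $ j - p $ j) - ?H 0\<bar> \<le> ?K * \<bar>q $ j - p $ j\<bar>"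
    proof (rule real_derivative_bound_segment)
      fix s assume "s \<in> closed_segment 0 (q $ j - p $ j)"
      note seg = coord_mix_axis_segment[OF p q jS this]
      show "(?H has_real_derivative (grad_re (?m + axis j s) $ j - grad_re p $ j)) (at s)"
        using freal_axis_has_real_derivative[OF seg(1)] by (auto intro!: derivative_eq_intros)
      have "\<bar>grad_re (?m + axis j s) $ j - grad_re p $ j\<bar> \<le> real CARD('n) * M2 * norm (?m + axis j s - p)"
        by (rule grad_re_component_bound_norm[OF p seg(1)])
      also have "\<dots> \<le> ?K"
        using seg(2) M2_nonneg[OF p] by (intro mult_left_mono) simp_all
      finally show "\<bar>grad_re (?m + axis j s) $ j - grad_re p $ j\<bar> \<le> ?K" .
    qed
    then show ?thesis by (simp add: coord_mix_insert[OF jS] algebra_simps)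
  qed
  then have "\<bar>freal f q - freal f p - (\<Sum>j\<in>UNIV. grad_re p $ j * (q $ j - p $ j))\<bar>
      \<le> (\<Sum>j\<in>UNIV. ?K * \<bar>q $ j - p $ j\<bar>)"
    by (rule telescope_coord_mix)
  also have "\<dots> = ?K * (\<Sum>j\<in>UNIV. \<bar>(q - p) $ j\<bar>)"
    by (simp add: sum_distrib_left)
  also have "\<dots> \<le> ?K * (real CARD('n) * norm (q - p))"
    using M2_nonneg[OF p] by (intro mult_left_mono sum_abs_le_card_norm) simp
  finally show ?thesis
    using rgrad_eq_grad_re[OF p] by (simp add: inner_vec_def power2_eq_square mult_ac)
qed

lemma isCont_freal:
  assumes p: "supn (p - x0) < R"
  shows "isCont (freal f) p"
proof -
  define g where "g q = norm (rgrad f p) * norm (q - p) + real CARD('n) ^ 2 * M2 * (norm (q - p))\<^sup>2" for q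
  have "\<forall>\<^sub>F q in at p. supn (q - x0) < R"
    unfolding eventually_at
  proof (intro exI[of _ "R - supn (p - x0)"] conjI ballI impI)
    show "0 < R - supn (p - x0)" using p by simp
    fix q assume "q \<noteq> p \<and> dist q p < R - supn (p - x0)"
    then show "supn (q - x0) < R"
      using supn_add_le[of "q - p" "p - x0"] supn_le_norm[of "q - p"] by (simp add: dist_norm)
  qed
  then have "\<forall>\<^sub>F q in at p. norm (freal f q - freal f p) \<le> g q"
  proof (rule eventually_mono)
    fix q assume "supn (q - x0) < R"
    then have "\<bar>freal f q - freal f p - rgrad f p \<bullet> (q - p)\<bar> \<le> real CARD('n) ^ 2 * M2 * (norm (q - p))\<^sup>2"
      by (rule freal_taylor_bound[OF p])
    then show "norm (freal f q - freal f p) \<le> g q"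
      using Cauchy_Schwarz_ineq2[of "rgrad f p" "q - p"] by (simp add: g_def)
  qed
  moreover have "(g \<longlongrightarrow> 0) (at p)"
  proof -
    have "isCont g p" unfolding g_def by (intro continuous_intros)
    then show ?thesis by (simp add: isCont_def g_def)
  qed
  ultimately have "((\<lambda>q. freal f q - freal f p) \<longlongrightarrow> 0) (at p)"
    by (rule Lim_null_comparison)
  then show ?thesis by (simp add: isCont_def LIM_zero_cancel)
qed

end

lemma the_root_bound:
  fixes \<Phi> :: "real \<Rightarrow> real"
  assumes cont: "continuous_on {-R..R} \<Phi>" and m: "0 < m"
    and slope: "\<And>a b. \<bar>a\<bar> \<le> R \<Longrightarrow> \<bar>b\<bar> \<le> R \<Longrightarrow> a \<le> b \<Longrightarrow> (b - a) * m \<le> \<Phi> b - \<Phi> a"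
    and small: "\<bar>\<Phi> 0 - E\<bar> < R * m"
  shows "\<bar>THE \<xi>. \<bar>\<xi>\<bar> < R \<and> \<Phi> \<xi> = E\<bar> * m \<le> \<bar>\<Phi> 0 - E\<bar>"
proof -
  define D where "D = \<bar>\<Phi> 0 - E\<bar> / m"
  have D: "0 \<le> D" "D < R" "D * m = \<bar>\<Phi> 0 - E\<bar>"
    using m small by (auto simp: D_def field_simps)
  have "\<Phi> (-D) \<le> E" "E \<le> \<Phi> D"
    using slope[of "-D" 0] slope[of 0 D] D by auto
  moreover have "continuous_on {-D..D} \<Phi>"
    using D by (intro continuous_on_subset[OF cont]) auto
  ultimately obtain \<xi> where \<xi>: "-D \<le> \<xi>" "\<xi> \<le> D" "\<Phi> \<xi> = E"
    using IVT'[of \<Phi> "-D" E D] D by auto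
  have "(THE \<xi>. \<bar>\<xi>\<bar> < R \<and> \<Phi> \<xi> = E) = \<xi>"
  proof (rule the_equality)
    show "\<bar>\<xi>\<bar> < R \<and> \<Phi> \<xi> = E" using \<xi> D by auto
  next
    fix \<eta> assume \<eta>: "\<bar>\<eta>\<bar> < R \<and> \<Phi> \<eta> = E"
    have strict: "\<Phi> a < \<Phi> b" if "\<bar>a\<bar> \<le> R" "\<bar>b\<bar> \<le> R" "a < b" for a b
    proof -
      have "0 < (b - a) * m" using m that by simp
      then show ?thesis using slope[of a b] that by linarith
    qed
    have "\<bar>\<eta>\<bar> \<le> R" "\<bar>\<xi>\<bar> \<le> R" using \<eta> \<xi> D by auto
    then show "\<eta> = \<xi>"
      using strict[of \<eta> \<xi>] strict[of \<xi> \<eta>] \<eta> \<xi> by (cases \<eta> \<xi> rule: linorder_cases) auto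
  qed
  moreover have "\<bar>\<xi>\<bar> * m \<le> D * m" using \<xi> m by (intro mult_right_mono) auto
  ultimately show ?thesis using D by simp
qed

text \<open>The part of \<open>G\<close> orthogonal to \<open>v\<close> has length at least \<open>\<delta> \<parallel>G\<parallel>\<close>; rescale it.\<close>

lemma tangent_witness:
  fixes v G :: "'a::real_inner"
  assumes v: "norm v = 1" and angle: "(G \<bullet> v)\<^sup>2 \<le> (1 - \<delta>\<^sup>2) * (norm G)\<^sup>2"
    and "0 < \<delta>" and "G \<noteq> 0" and "0 \<le> \<rho>"
  obtains w where "w \<bullet> v = 0" "norm w = \<rho>" "\<delta> * norm G * \<rho> \<le> G \<bullet> w"
proof -
  define T where "T = G - (G \<bullet> v) *\<^sub>R v"
  have vv: "v \<bullet> v = 1" using v by (simp add: power2_norm_eq_inner[symmetric])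
  have Tv: "T \<bullet> v = 0" by (simp add: T_def inner_diff_left vv)
  have GT: "G \<bullet> T = (norm T)\<^sup>2"
    using Tv by (simp add: T_def inner_diff_left inner_diff_right inner_commute power2_norm_eq_inner)
  have "(norm T)\<^sup>2 = G \<bullet> T" by (rule GT[symmetric])
  also have "\<dots> = (norm G)\<^sup>2 - (G \<bullet> v)\<^sup>2"
    by (simp add: T_def inner_diff_right dot_square_norm power2_eq_square)
  finally have "(\<delta> * norm G)\<^sup>2 \<le> (norm T)\<^sup>2"
    using angle by (simp add: power_mult_distrib algebra_simps)
  then have T: "\<delta> * norm G \<le> norm T" by (rule power2_le_imp_le) simp
  then have "T \<noteq> 0" using \<open>0 < \<delta>\<close> \<open>G \<noteq> 0\<close> by (auto simp: mult_le_0_iff)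
  show ?thesis
  proof
    show "((\<rho> / norm T) *\<^sub>R T) \<bullet> v = 0" by (simp add: Tv)
    show "norm ((\<rho> / norm T) *\<^sub>R T) = \<rho>" using \<open>T \<noteq> 0\<close> \<open>0 \<le> \<rho>\<close> by simp
    have "G \<bullet> ((\<rho> / norm T) *\<^sub>R T) = \<rho> * norm T"
      using \<open>T \<noteq> 0\<close> by (simp add: GT power2_eq_square)
    then show "\<delta> * norm G * \<rho> \<le> G \<bullet> ((\<rho> / norm T) *\<^sub>R T)"
      using mult_left_mono[OF T \<open>0 \<le> \<rho>\<close>] by (simp add: mult_ac)
  qed
qed

text \<open>An orthonormal family of \<open>CARD('n)\<close> vectors in \<open>\<real>\<^sup>n\<close> spans: otherwise the
  residual of \<open>w\<close> would extend it to an independent set that is too large.\<close>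

lemma orthonormal_family_expansion:
  fixes b :: "'n \<Rightarrow> real^'n"
  assumes orth: "\<forall>i j. b i \<bullet> b j = (if i = j then 1 else 0)"
  shows "(\<Sum>j\<in>UNIV. (w \<bullet> b j) *\<^sub>R b j) = w"
proof (rule ccontr)
  define r where "r = w - (\<Sum>j\<in>UNIV. (w \<bullet> b j) *\<^sub>R b j)"
  assume "(\<Sum>j\<in>UNIV. (w \<bullet> b j) *\<^sub>R b j) \<noteq> w"
  then have "r \<noteq> 0" unfolding r_def by simp
  have rb: "r \<bullet> b k = 0" for k
  proof -
    have "(\<Sum>j\<in>UNIV. (w \<bullet> b j) *\<^sub>R b j) \<bullet> b k = (\<Sum>j\<in>UNIV. (w \<bullet> b j) * (b j \<bullet> b k))"
      by (simp add: inner_sum_left)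
    also have "\<dots> = (\<Sum>j\<in>UNIV. if j = k then w \<bullet> b k else 0)"
      using orth by (intro sum.cong) auto
    finally show ?thesis unfolding r_def by (simp add: inner_diff_left)
  qed
  have "inj b"
  proof (rule injI)
    fix i j assume "b i = b j"
    then have "b i \<bullet> b j = 1" using orth by metis
    then show "i = j" using orth by (metis zero_neq_one)
  qed
  have "r \<notin> range b"
  proof
    assume "r \<in> range b"
    then obtain k where "r = b k" by auto
    then show False using rb[of k] orth by simp
  qed
  have "pairwise orthogonal (insert r (range b))"
    unfolding pairwise_def orthogonal_def using orth rb by (auto simp: inner_commute)
  moreover have "0 \<notin> insert r (range b)"
    using \<open>r \<noteq> 0\<close> orth by auto (metis inner_zero_left zero_neq_one)
  ultimately have "independent (insert r (range b))" by (rule pairwise_orthogonal_independent)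
  then have "card (insert r (range b)) \<le> DIM(real^'n)" using independent_bound by blast
  moreover have "card (insert r (range b)) = CARD('n) + 1"
    using \<open>r \<notin> range b\<close> card_image[OF \<open>inj b\<close>] by simp
  ultimately show False by simp
qed

lemma phi_tangent_coordinates:
  fixes b :: "'n \<Rightarrow> real^'n"
  assumes orth: "\<forall>i j. b i \<bullet> b j = (if i = j then 1 else 0)" and w: "w \<bullet> b i0 = 0"
  obtains y where "y $ i0 = 0" "norm y = norm w" "\<And>\<xi>. phi b i0 \<xi> y x0 = x0 + \<xi> *\<^sub>R b i0 + w"
proof
  define y where "y = (\<chi> j. if j = i0 then 0 else w \<bullet> b j)"
  show "y $ i0 = 0" by (simp add: y_def)
  have "(\<Sum>j\<in>UNIV - {i0}. y $ j *\<^sub>R b j) = (\<Sum>j\<in>UNIV - {i0}. (w \<bullet> b j) *\<^sub>R b j)"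
    by (rule sum.cong) (auto simp: y_def)
  also have "\<dots> = (\<Sum>j\<in>UNIV. (w \<bullet> b j) *\<^sub>R b j)"
    using w by (simp add: sum_diff1)
  finally show "phi b i0 \<xi> y x0 = x0 + \<xi> *\<^sub>R b i0 + w" for \<xi>
    using orthonormal_family_expansion[OF orth] by (simp add: phi_def)
  have "(norm y)\<^sup>2 = (\<Sum>j\<in>UNIV. y $ j * y $ j)"
    by (simp add: power2_norm_eq_inner inner_vec_def)
  also have "\<dots> = (\<Sum>j\<in>UNIV. (w \<bullet> b j) * (w \<bullet> b j))"
    using w by (intro sum.cong) (auto simp: y_def)
  also have "\<dots> = w \<bullet> (\<Sum>j\<in>UNIV. (w \<bullet> b j) *\<^sub>R b j)"
    by (simp add: inner_sum_right)
  also have "\<dots> = (norm w)\<^sup>2"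
    using orthonormal_family_expansion[OF orth] by (simp add: power2_norm_eq_inner)
  finally show "norm y = norm w" by simp
qed

subsection \<open>The level curve in the normal direction\<close>

context analytic_box
begin

lemma rgrad_inner_lower_bound:
  assumes v: "norm v = 1" and G0: "rgrad f x0 = \<mu>0 *\<^sub>R v" and p: "supn (p - x0) < R"
  shows "\<mu>0 - real CARD('n) ^ 2 * M2 * norm (p - x0) \<le> rgrad f p \<bullet> v"
proof -
  have "0 \<le> supn (p - x0)" using order_trans[OF norm_ge_zero supn_component_le] by blast
  then have x0box: "supn (x0 - x0) < R" using p by simp
  have "\<bar>(rgrad f p - rgrad f x0) \<bullet> v\<bar> \<le> norm (rgrad f p - rgrad f x0)"
    using Cauchy_Schwarz_ineq2[of _ v] v by simp
  also have "\<dots> \<le> real CARD('n) ^ 2 * M2 * norm (p - x0)"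
    by (rule rgrad_lipschitz[OF x0box p])
  finally show ?thesis using G0 v by (simp add: inner_diff_left dot_square_norm)
qed

lemma normal_slope:
  assumes v: "norm v = 1" and G0: "rgrad f x0 = \<mu>0 *\<^sub>R v"
    and small: "16 * real CARD('n) ^ 2 * M2 * \<rho>1 \<le> \<mu>0" and box: "2 * \<rho>1 < R"
    and w: "norm w \<le> \<rho>1" and a: "\<bar>a\<bar> \<le> \<rho>1" and b: "\<bar>b\<bar> \<le> \<rho>1" and "a \<le> b"
  shows "(b - a) * \<mu>0 / 2 \<le> freal f (x0 + b *\<^sub>R v + w) - freal f (x0 + a *\<^sub>R v + w)"
proof -
  define K where "K = real CARD('n) ^ 2 * M2"
  let ?p = "\<lambda>\<xi>. x0 + \<xi> *\<^sub>R v + w"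
  define g where "g = rgrad f (?p a) \<bullet> v"
  have near: "norm (?p \<xi> - x0) \<le> 2 * \<rho>1" if "\<bar>\<xi>\<bar> \<le> \<rho>1" for \<xi>
    using norm_triangle_ineq[of "\<xi> *\<^sub>R v" w] v w that by simp
  have inbox: "supn (?p \<xi> - x0) < R" if "\<bar>\<xi>\<bar> \<le> \<rho>1" for \<xi>
    using near[OF that] supn_le_norm[of "?p \<xi> - x0"] box by linarith
  have x0box: "supn (x0 - x0) < R" using box order_trans[OF norm_ge_zero w] by simp
  have "0 \<le> K" using M2_nonneg[OF x0box] by (simp add: K_def)
  have "K * norm (?p a - x0) \<le> 2 * (K * \<rho>1)"
    using mult_left_mono[OF near[OF a] \<open>0 \<le> K\<close>] by (simp only: mult.left_commute[of K 2])
  then have "\<mu>0 - 2 * (K * \<rho>1) \<le> g"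
    using rgrad_inner_lower_bound[OF v G0 inbox[OF a]] unfolding g_def K_def by linarith
  then have "(b - a) * (\<mu>0 - 2 * (K * \<rho>1)) \<le> (b - a) * g"
    using \<open>a \<le> b\<close> by (intro mult_left_mono) auto
  moreover have "(b - a)\<^sup>2 \<le> (b - a) * (2 * \<rho>1)"
    using a b \<open>a \<le> b\<close> by (simp add: power2_eq_square mult_left_mono)
  then have "K * (b - a)\<^sup>2 \<le> K * ((b - a) * (2 * \<rho>1))"
    using \<open>0 \<le> K\<close> by (rule mult_left_mono)
  moreover have "(b - a) * (4 * (K * \<rho>1)) \<le> (b - a) * (\<mu>0 / 2)"
  proof (rule mult_left_mono)
    have "0 \<le> K * \<rho>1" using \<open>0 \<le> K\<close> a by simp
    then show "4 * (K * \<rho>1) \<le> \<mu>0 / 2" using small unfolding K_def mult.assoc by linarith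
  qed (use \<open>a \<le> b\<close> in simp)
  moreover have "(b - a) * g - K * (b - a)\<^sup>2 \<le> freal f (?p b) - freal f (?p a)"
  proof -
    have "?p b - ?p a = (b - a) *\<^sub>R v" by (simp add: algebra_simps)
    then show ?thesis
      using freal_taylor_bound[OF inbox[OF a] inbox[OF b]] v by (simp add: g_def K_def power2_abs)
  qed
  moreover have
    "(b - a) * (\<mu>0 - 2 * (K * \<rho>1)) = (b - a) * \<mu>0 - 2 * ((b - a) * (K * \<rho>1))"
    "K * ((b - a) * (2 * \<rho>1)) = 2 * ((b - a) * (K * \<rho>1))"
    "(b - a) * (4 * (K * \<rho>1)) = 4 * ((b - a) * (K * \<rho>1))"
    "(b - a) * (\<mu>0 / 2) = (b - a) * \<mu>0 / 2"
    by (simp_all add: algebra_simps)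
  ultimately show ?thesis by linarith
qed

text \<open>The \<open>THE\<close>-term is the height \<open>g(y)\<close> of the level set over the tangent point
  \<open>x0 + w\<close>; it is quadratic in \<open>w\<close>.\<close>

lemma level_curve_offset:
  assumes v: "norm v = 1" and G0: "rgrad f x0 = \<mu>0 *\<^sub>R v" and "0 < \<mu>0"
    and small: "16 * real CARD('n) ^ 2 * M2 * \<rho>1 \<le> \<mu>0" and box: "2 * \<rho>1 < R" and "0 < \<rho>1"
    and w: "w \<bullet> v = 0" "norm w \<le> \<rho>1"
  shows "\<bar>THE \<xi>. \<bar>\<xi>\<bar> < \<rho>1 \<and> freal f (x0 + \<xi> *\<^sub>R v + w) = freal f x0\<bar> * \<mu>0
    \<le> 2 * real CARD('n) ^ 2 * M2 * (norm w)\<^sup>2"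
proof -
  let ?\<Phi> = "\<lambda>\<xi>. freal f (x0 + \<xi> *\<^sub>R v + w)"
  have inbox: "supn (x0 + \<xi> *\<^sub>R v + w - x0) < R" if "\<bar>\<xi>\<bar> \<le> \<rho>1" for \<xi>
    using norm_triangle_ineq[of "\<xi> *\<^sub>R v" w] supn_le_norm[of "\<xi> *\<^sub>R v + w"] v w that box
    by simp
  have x0box: "supn (x0 - x0) < R" using box \<open>0 < \<rho>1\<close> by simp
  have L_nonneg: "0 \<le> real CARD('n) ^ 2 * M2" using M2_nonneg[OF x0box] by simp
  have "continuous_on {-\<rho>1..\<rho>1} ?\<Phi>"
  proof (intro continuous_at_imp_continuous_on ballI)
    fix \<xi> :: real assume "\<xi> \<in> {-\<rho>1..\<rho>1}"
    then have "isCont (freal f) (x0 + \<xi> *\<^sub>R v + w)" using inbox isCont_freal by auto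
    then show "isCont ?\<Phi> \<xi>" by (rule isCont_o2[rotated]) (intro continuous_intros)
  qed
  moreover have "\<bar>?\<Phi> 0 - freal f x0\<bar> \<le> real CARD('n) ^ 2 * M2 * (norm w)\<^sup>2"
    using freal_taylor_bound[OF x0box inbox[of 0]] \<open>0 < \<rho>1\<close> G0 w by (simp add: inner_commute)
  moreover have "real CARD('n) ^ 2 * M2 * (norm w)\<^sup>2 < \<rho>1 * (\<mu>0 / 2)"
  proof -
    have "(norm w)\<^sup>2 \<le> \<rho>1\<^sup>2" using w(2) by (intro power_mono) auto
    then have "real CARD('n) ^ 2 * M2 * (norm w)\<^sup>2 \<le> real CARD('n) ^ 2 * M2 * \<rho>1 * \<rho>1"
      using mult_left_mono[OF _ L_nonneg] by (simp add: power2_eq_square mult.assoc)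
    also have "\<dots> \<le> \<mu>0 / 16 * \<rho>1"
      using small \<open>0 < \<rho>1\<close> by (intro mult_right_mono) auto
    moreover have "0 < \<mu>0 / 16 * \<rho>1" using \<open>0 < \<mu>0\<close> \<open>0 < \<rho>1\<close> by simp
    moreover have "\<rho>1 * (\<mu>0 / 2) = 8 * (\<mu>0 / 16 * \<rho>1)" by simp
    ultimately show ?thesis by linarith
  qed
  ultimately have "\<bar>THE \<xi>. \<bar>\<xi>\<bar> < \<rho>1 \<and> ?\<Phi> \<xi> = freal f x0\<bar> * (\<mu>0 / 2) \<le> \<bar>?\<Phi> 0 - freal f x0\<bar>"
    using normal_slope[OF v G0 small box w(2)] \<open>0 < \<mu>0\<close> by (intro the_root_bound) auto
  then show ?thesis
    using \<open>\<bar>?\<Phi> 0 - freal f x0\<bar> \<le> real CARD('n) ^ 2 * M2 * (norm w)\<^sup>2\<close> by simp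
qed

lemma increment_lower_bound:
  assumes h: "supn h < R / 2" and box: "4 * \<rho> \<le> R"
    and v: "norm v = 1" and w: "norm w = \<rho>"
    and Gw: "\<delta> * norm (rgrad f (x0 + h)) * \<rho> \<le> rgrad f (x0 + h) \<bullet> w"
    and \<xi>: "\<bar>\<xi>\<bar> \<le> \<delta>\<^sup>2 * \<rho> / 8"
    and small: "16 * real CARD('n) ^ 2 * M2 * \<rho> \<le> norm (rgrad f (x0 + h)) * \<delta>\<^sup>2"
    and \<delta>: "0 \<le> \<delta>" "\<delta> \<le> 1"
  shows "1/2 * norm (rgrad f (x0 + h)) * \<delta>\<^sup>2 * \<rho> \<le> freal f (x0 + \<xi> *\<^sub>R v + w + h) - freal f (x0 + h)"
proof -
  define G1 where "G1 = rgrad f (x0 + h)"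
  define d where "d = \<xi> *\<^sub>R v + w"
  define P where "P = \<delta>\<^sup>2 * \<rho> * norm G1"
  have "0 \<le> \<rho>" using w by auto
  have "\<delta>\<^sup>2 \<le> \<delta>" "\<delta> \<le> 1" using \<delta> by (auto simp: power2_eq_square mult_left_le_one_le)
  then have "\<delta>\<^sup>2 * \<rho> \<le> \<rho>" using \<open>0 \<le> \<rho>\<close> by (simp add: mult_left_le_one_le)
  then have d: "norm d \<le> 2 * \<rho>"
    using norm_triangle_ineq[of "\<xi> *\<^sub>R v" w] v w \<xi> \<open>0 \<le> \<rho>\<close> by (simp add: d_def)
  have x1box: "supn (x0 + h - x0) < R" using h box \<open>0 \<le> \<rho>\<close> by simp
  have "supn (x0 + h + d - x0) \<le> supn h + norm d"
    using supn_add_le[of h d] supn_le_norm[of d] by simp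
  then have x1dbox: "supn (x0 + h + d - x0) < R" using h d box by linarith
  have L_nonneg: "0 \<le> real CARD('n) ^ 2 * M2" using M2_nonneg[OF x1box] by simp
  have taylor: "G1 \<bullet> d - real CARD('n) ^ 2 * M2 * (norm d)\<^sup>2 \<le> freal f (x0 + h + d) - freal f (x0 + h)"
    using freal_taylor_bound[OF x1box x1dbox] by (simp add: G1_def)
  have "\<bar>G1 \<bullet> v\<bar> \<le> norm G1" using Cauchy_Schwarz_ineq2[of G1 v] v by simp
  then have "\<bar>\<xi>\<bar> * \<bar>G1 \<bullet> v\<bar> \<le> \<delta>\<^sup>2 * \<rho> / 8 * norm G1"
    using \<xi> \<open>0 \<le> \<rho>\<close> by (intro mult_mono) auto
  moreover have "\<delta>\<^sup>2 * \<rho> / 8 * norm G1 = P / 8" by (simp add: P_def)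
  ultimately have "\<bar>\<xi> * (G1 \<bullet> v)\<bar> \<le> P / 8" by (simp add: abs_mult)
  then have "- (P / 8) \<le> \<xi> * (G1 \<bullet> v)" using abs_ge_minus_self[of "\<xi> * (G1 \<bullet> v)"] by linarith
  moreover have "G1 \<bullet> d = \<xi> * (G1 \<bullet> v) + G1 \<bullet> w" by (simp add: d_def inner_add_right)
  moreover have "\<delta>\<^sup>2 * (\<rho> * norm G1) \<le> \<delta> * (\<rho> * norm G1)"
    using \<open>\<delta>\<^sup>2 \<le> \<delta>\<close> \<open>0 \<le> \<rho>\<close> by (intro mult_right_mono) auto
  then have "P \<le> \<delta> * norm G1 * \<rho>" by (simp add: P_def mult_ac)
  ultimately have "P - P / 8 \<le> G1 \<bullet> d" using Gw by (simp add: G1_def)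
  moreover have "real CARD('n) ^ 2 * M2 * (norm d)\<^sup>2 \<le> P / 4"
  proof -
    have "real CARD('n) ^ 2 * M2 * (norm d)\<^sup>2 \<le> real CARD('n) ^ 2 * M2 * (2 * \<rho>)\<^sup>2"
      using d L_nonneg by (intro mult_left_mono power_mono) auto
    also have "\<dots> = 4 * \<rho> * (real CARD('n) ^ 2 * M2 * \<rho>)" by (simp add: power2_eq_square)
    also have "\<dots> \<le> 4 * \<rho> * (norm G1 * \<delta>\<^sup>2 / 16)"
      using small \<open>0 \<le> \<rho>\<close> by (intro mult_left_mono) (auto simp: G1_def)
    finally show ?thesis by (simp add: P_def mult_ac)
  qed
  moreover have "1/2 * norm G1 * \<delta>\<^sup>2 * \<rho> = P / 2" by (simp add: P_def)
  moreover have "0 \<le> P" using \<open>0 \<le> \<rho>\<close> by (simp add: P_def)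
  ultimately have "1/2 * norm G1 * \<delta>\<^sup>2 * \<rho> \<le> freal f (x0 + h + d) - freal f (x0 + h)"
    using taylor by linarith
  then show ?thesis by (simp add: G1_def d_def algebra_simps)
qed

lemma transversal_level_shift:
  fixes b :: "'n \<Rightarrow> real^'n"
  assumes orth: "\<forall>i j. b i \<bullet> b j = (if i = j then 1 else 0)"
    and \<mu>0: "0 < norm (rgrad f x0)" and normal: "b i0 = (1 / norm (rgrad f x0)) *\<^sub>R rgrad f x0"
    and h: "supn h < R / 2"
    and angle: "(rgrad f (x0 + h) \<bullet> rgrad f x0)\<^sup>2
      \<le> (1 - \<delta>\<^sup>2) * (norm (rgrad f (x0 + h)))\<^sup>2 * (norm (rgrad f x0))\<^sup>2"
    and \<delta>: "0 < \<delta>" "\<delta> \<le> 1" and \<rho>: "0 < \<rho>" "\<rho> \<le> \<rho>1"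
    and \<rho>1: "16 * real CARD('n) ^ 2 * M2 * \<rho>1 \<le> norm (rgrad f x0)" "16 * \<rho>1 \<le> R"
    and \<rho>_small: "16 * real CARD('n) ^ 2 * M2 * \<rho> \<le> norm (rgrad f x0) * \<delta>\<^sup>2"
      "16 * real CARD('n) ^ 2 * M2 * \<rho> \<le> norm (rgrad f (x0 + h)) * \<delta>\<^sup>2"
    and \<mu>1: "0 < norm (rgrad f (x0 + h))"
  shows "\<exists>y. y $ i0 = 0 \<and> norm y \<le> \<rho> \<and>
    (let x0' = phi b i0 (THE \<xi>. \<bar>\<xi>\<bar> < \<rho>1 \<and> freal f (phi b i0 \<xi> y x0) = freal f x0) y x0 in
      norm (x0' - x0) \<le> 2 * \<rho> \<and>
      \<bar>freal f (x0' + h) - freal f (x0 + h)\<bar> \<ge> 1/2 * norm (rgrad f (x0 + h)) * \<delta>\<^sup>2 * \<rho>)"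
proof -
  define K where "K = real CARD('n) ^ 2 * M2"
  define \<mu>0 where "\<mu>0 = norm (rgrad f x0)"
  define G1 where "G1 = rgrad f (x0 + h)"
  define nv where "nv = b i0"
  have nv: "norm nv = 1" using orth by (simp add: nv_def norm_eq_sqrt_inner)
  have G0: "rgrad f x0 = \<mu>0 *\<^sub>R nv" using normal \<mu>0 by (simp add: nv_def \<mu>0_def)
  have "\<mu>0\<^sup>2 * (G1 \<bullet> nv)\<^sup>2 \<le> \<mu>0\<^sup>2 * ((1 - \<delta>\<^sup>2) * (norm G1)\<^sup>2)"
    using angle nv by (simp add: G0 G1_def power_mult_distrib mult_ac)
  then have "(G1 \<bullet> nv)\<^sup>2 \<le> (1 - \<delta>\<^sup>2) * (norm G1)\<^sup>2"
    using \<mu>0 by (simp add: \<mu>0_def)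
  moreover have "G1 \<noteq> 0" using \<mu>1 by (auto simp: G1_def)
  ultimately obtain w where w: "w \<bullet> nv = 0" "norm w = \<rho>" "\<delta> * norm G1 * \<rho> \<le> G1 \<bullet> w"
    using tangent_witness[OF nv _ \<delta>(1) \<open>G1 \<noteq> 0\<close>] \<rho>(1) by (metis less_imp_le)
  obtain y where y: "y $ i0 = 0" "norm y = \<rho>" and phi_eq: "\<And>\<xi>. phi b i0 \<xi> y x0 = x0 + \<xi> *\<^sub>R nv + w"
    using phi_tangent_coordinates[OF orth, of w i0 x0] w by (auto simp: nv_def)
  define \<xi>s where "\<xi>s = (THE \<xi>. \<bar>\<xi>\<bar> < \<rho>1 \<and> freal f (x0 + \<xi> *\<^sub>R nv + w) = freal f x0)"
  have "\<bar>\<xi>s\<bar> * \<mu>0 \<le> 2 * K * \<rho>\<^sup>2"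
    using level_curve_offset[OF nv G0 _ \<rho>1(1)[folded \<mu>0_def], of w] \<mu>0 \<rho> \<rho>1(2) w
    by (simp add: \<xi>s_def K_def \<mu>0_def)
  also have "\<dots> \<le> \<delta>\<^sup>2 * \<rho> / 8 * \<mu>0"
  proof -
    have "K * \<rho> \<le> \<mu>0 * \<delta>\<^sup>2 / 16" using \<rho>_small(1) by (simp add: K_def \<mu>0_def)
    then have "2 * \<rho> * (K * \<rho>) \<le> 2 * \<rho> * (\<mu>0 * \<delta>\<^sup>2 / 16)" using \<rho>(1) by simp
    then show ?thesis by (simp add: power2_eq_square mult_ac)
  qed
  finally have \<xi>s: "\<bar>\<xi>s\<bar> \<le> \<delta>\<^sup>2 * \<rho> / 8" using \<mu>0 by (simp add: \<mu>0_def)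
  have "\<delta>\<^sup>2 * \<rho> \<le> \<rho>" using \<delta> \<rho>(1) by (simp add: power_le_one mult_left_le_one_le)
  then have near: "norm (x0 + \<xi>s *\<^sub>R nv + w - x0) \<le> 2 * \<rho>"
    using norm_triangle_ineq[of "\<xi>s *\<^sub>R nv" w] nv w \<xi>s by simp
  have "1/2 * norm G1 * \<delta>\<^sup>2 * \<rho> \<le> freal f (x0 + \<xi>s *\<^sub>R nv + w + h) - freal f (x0 + h)"
    using increment_lower_bound[OF h _ nv w(2) _ \<xi>s _ less_imp_le[OF \<delta>(1)] \<delta>(2)] w(3) \<rho>_small(2) \<rho> \<rho>1(2)
    by (simp add: G1_def K_def)
  then have "1/2 * norm G1 * \<delta>\<^sup>2 * \<rho> \<le> \<bar>freal f (x0 + \<xi>s *\<^sub>R nv + w + h) - freal f (x0 + h)\<bar>"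
    by (rule order_trans[OF _ abs_ge_self])
  then show ?thesis
    using y near by (intro exI[of _ y]) (simp add: Let_def phi_eq G1_def flip: \<xi>s_def)
qed

end

lemma smallness_bounds:
  fixes c K M2 \<mu>0 \<mu>1 \<rho>0 \<rho>1 \<rho> \<delta> :: real
  assumes c: "0 < c" "16 * K * c \<le> 1" and K: "1 \<le> K" and M2: "0 < M2"
    and \<rho>1: "0 < \<rho>1" "\<rho>1 \<le> c * min \<rho>0 (\<mu>0 / M2)"
    and \<rho>: "0 < \<rho>" "\<rho> \<le> c * min (c * \<rho>1) (min \<mu>0 \<mu>1 / M2 * \<delta>\<^sup>2)"
  shows "16 * K * M2 * \<rho>1 \<le> \<mu>0" and "16 * \<rho>1 \<le> \<rho>0" and "\<rho> \<le> \<rho>1"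
    and "16 * K * M2 * \<rho> \<le> \<mu>0 * \<delta>\<^sup>2" and "16 * K * M2 * \<rho> \<le> \<mu>1 * \<delta>\<^sup>2" and "0 < \<mu>1"
proof -
  have "1 * (16 * c) \<le> K * (16 * c)" using K c by (intro mult_right_mono) auto
  moreover have "K * (16 * c) = 16 * K * c" by simp
  ultimately have c16: "16 * c \<le> 1" using c by linarith
  have bound: "16 * K * M2 * t \<le> X" if "0 < t" "t \<le> c * (X / M2)" for t X
  proof -
    have "0 < c * (X / M2)" using that by linarith
    then have "0 < X" using c M2 by (simp add: zero_less_mult_iff zero_less_divide_iff)
    have "16 * K * M2 * t \<le> 16 * K * M2 * (c * (X / M2))"
      using that K M2 by (intro mult_left_mono) auto
    also have "\<dots> = (16 * K * c) * X" using M2 by simp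
    also have "\<dots> \<le> X" using c \<open>0 < X\<close> by (simp add: mult_left_le_one_le)
    finally show ?thesis .
  qed
  have min_le: "c * min x y \<le> c * x" "c * min x y \<le> c * y" for x y
    using c by (intro mult_left_mono; simp)+
  have "\<rho>1 \<le> c * (\<mu>0 / M2)" using \<rho>1(2) min_le(2) by (rule order_trans)
  then show "16 * K * M2 * \<rho>1 \<le> \<mu>0" using bound \<rho>1(1) by blast
  have "\<rho> \<le> c * (min \<mu>0 \<mu>1 / M2 * \<delta>\<^sup>2)" using \<rho>(2) min_le(2) by (rule order_trans)
  then have "\<rho> \<le> c * (min \<mu>0 \<mu>1 * \<delta>\<^sup>2 / M2)" by simp
  then have "16 * K * M2 * \<rho> \<le> min \<mu>0 \<mu>1 * \<delta>\<^sup>2" using bound \<rho>(1) by blast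
  moreover have "min \<mu>0 \<mu>1 * \<delta>\<^sup>2 \<le> \<mu>0 * \<delta>\<^sup>2" "min \<mu>0 \<mu>1 * \<delta>\<^sup>2 \<le> \<mu>1 * \<delta>\<^sup>2"
    by (intro mult_right_mono; simp)+
  ultimately show "16 * K * M2 * \<rho> \<le> \<mu>0 * \<delta>\<^sup>2" "16 * K * M2 * \<rho> \<le> \<mu>1 * \<delta>\<^sup>2"
    by linarith+
  have "0 < 16 * K * M2 * \<rho>" using K M2 \<rho>(1) by simp
  then have "0 < min \<mu>0 \<mu>1 * \<delta>\<^sup>2" using \<open>16 * K * M2 * \<rho> \<le> min \<mu>0 \<mu>1 * \<delta>\<^sup>2\<close> by linarith
  then show "0 < \<mu>1" by (auto simp: zero_less_mult_iff min_def split: if_splits)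
  have "\<rho>1 \<le> c * \<rho>0" using \<rho>1(2) min_le(1) by (rule order_trans)
  moreover have "0 < c * \<rho>0" using calculation \<rho>1(1) by linarith
  then have "16 * c * \<rho>0 \<le> 1 * \<rho>0"
    using c16 c by (intro mult_right_mono) (auto simp: zero_less_mult_iff)
  ultimately show "16 * \<rho>1 \<le> \<rho>0" by linarith
  have "\<rho> \<le> c * (c * \<rho>1)" using \<rho>(2) min_le(1) by (rule order_trans)
  also have "\<dots> \<le> 1 * (1 * \<rho>1)" using c16 c \<rho>1(1) by (intro mult_mono) auto
  finally show "\<rho> \<le> \<rho>1" by simp
qed

theorem lemma4p7:
  "\<exists>c0>0. \<forall>c. 0 < c \<and> c \<le> c0 \<longrightarrow>
    (\<forall>(f :: complex^'n \<Rightarrow> complex) (x0 :: real^'n) \<rho>0 M2 \<rho>1 (b :: 'n \<Rightarrow> real^'n) i0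
       (h :: real^'n) \<delta>0 \<rho>.
      let P = {z. supn (z - cvec x0) < \<rho>0};
          \<mu>0 = norm (rgrad f x0);
          E0 = freal f x0;
          r = c * \<rho>1;
          g = (\<lambda>y. THE \<xi>::real. \<bar>\<xi>\<bar> < \<rho>1 \<and> freal f (phi b i0 \<xi> y x0) = E0);
          x1 = x0 + h;
          \<mu>1 = norm (rgrad f x1);
          \<mu> = min \<mu>0 \<mu>1
      in
      0 < \<rho>0 \<and> analytic_cn f P \<and>
      (\<forall>x. cvec x \<in> P \<longrightarrow> f (cvec x) \<in> \<real>) \<and>
      0 < M2 \<and> (\<forall>is z. length is = 2 \<and> z \<in> P \<longrightarrow> norm (cpds is f z) \<le> M2) \<and>
      \<mu>0 > 0 \<and>
      (\<forall>i j. b i \<bullet> b j = (if i = j then 1 else 0)) \<and> b i0 = (1 / \<mu>0) *\<^sub>R rgrad f x0 \<and>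
      0 < \<rho>1 \<and> \<rho>1 \<le> c * min \<rho>0 (\<mu>0 / M2) \<and>
      supn h < \<rho>0 / 2 \<and>
      (rgrad f x1 \<bullet> rgrad f x0)\<^sup>2 \<le> (1 - \<delta>0\<^sup>2) * (norm (rgrad f x1))\<^sup>2 * (norm (rgrad f x0))\<^sup>2 \<and>
      0 < \<delta>0 \<and> \<delta>0 \<le> 1 \<and>
      0 < \<rho> \<and> \<rho> \<le> c * min r (\<mu> / M2 * \<delta>0\<^sup>2)
      \<longrightarrow>
      (\<exists>y :: real^'n. y $ i0 = 0 \<and> norm y \<le> \<rho> \<and>
        (let x0' = phi b i0 (g y) y x0 in
          norm (x0' - x0) \<le> 2 * \<rho> \<and>
          \<bar>freal f (x0' + h) - freal f (x0 + h)\<bar> \<ge> 1/2 * \<mu>1 * \<delta>0\<^sup>2 * \<rho>)))"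
  unfolding Let_def
proof (intro exI[of _ "1 / (16 * real CARD('n) ^ 2)"] conjI allI impI, goal_cases)
  case 1
  then show ?case by simp
next
  case (2 c f x0 \<rho>0 M2 \<rho>1 b i0 h \<delta>0 \<rho>)
  then interpret analytic_box f x0 \<rho>0 M2 by unfold_locales auto
  have c: "16 * real CARD('n) ^ 2 * c \<le> 1" and K: "1 \<le> real CARD('n) ^ 2"
    using 2 by (simp_all add: field_simps)
  have "0 < c" "0 < M2" "0 < \<rho>1" "\<rho>1 \<le> c * min \<rho>0 (norm (rgrad f x0) / M2)" "0 < \<rho>"
    "\<rho> \<le> c * min (c * \<rho>1) (min (norm (rgrad f x0)) (norm (rgrad f (x0 + h))) / M2 * \<delta>0\<^sup>2)"
    using 2 by simp_all
  note bounds = smallness_bounds[OF this(1) c K this(2-6)]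
  show ?case
    using transversal_level_shift[of b i0 h \<delta>0 \<rho> \<rho>1] 2 bounds by (simp add: Let_def)
qed

end
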